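(* The set $\mathcal N$ is exactly the set of all words over $A$ of the form $x^{i_n}y^{\epsilon_n}\cdots x^{i_1}y^{\epsilon_1}x^{i_0}$ such that $n\ge 0$, each $\epsilon_j\in\{\pm1\}$, each $i_j\in\mathbb Z$, and for every $j\in\{1,\dots,n-1\}$: (1) if $i_j=0$ then $\epsilon_j=\epsilon_{j+1}$; (2) if $\epsilon_j=1$ then $i_j\le 0$; (3) if $\epsilon_j=-1$ then $i_j\le 1$.
   Context: Let $A=\{x^{\pm1},y^{\pm1}\}$ (generators of Thompson's group $F$, $x=x_0$, $y=x_1$). Guba and Sapir's rewriting system $\Sigma$ consists of the rules $aa^{-1}\to\emptyset$ for $a\in A$, $y^\epsilon x^iy\to x^iyx^{-i-1}y^\epsilon x^{i+1}$ and $y^\epsilon x^{i+1}y^{-1}\to x^{i+1}y^{-1}x^{-i}y^\epsilon x^i$ for $\epsilon\in\{1,-1\}$, $i\ge1$. $\mathcal N$ is the set of words over $A$ irreducible with respect to $\Sigma$, i.e. words containing no subword $aa^{-1}$, $y^\epsilon x^iy$, or $y^\epsilon x^{i+1}y^{-1}$ ($\epsilon=\pm1$, $i\ge1$). *)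

theory Defs
  imports Main
begin

datatype letter = X | Xinv | Y | Yinv

fun linv :: "letter \<Rightarrow> letter" where
  "linv X = Xinv" | "linv Xinv = X" | "linv Y = Yinv" | "linv Yinv = Y"

definition ylet :: "int \<Rightarrow> letter" where
  "ylet e = (if e = 1 then Y else Yinv)"

definition xpow :: "int \<Rightarrow> letter list" where
  "xpow i = (if i \<ge> 0 then replicate (nat i) X else replicate (nat (- i)) Xinv)"

definition subword :: "letter list \<Rightarrow> letter list \<Rightarrow> bool" where
  "subword u w \<longleftrightarrow> (\<exists>p q. w = p @ u @ q)"

text \<open>Irreducibility with respect to the Guba--Sapir rewriting system Sigma:
  no subword a a^-1, y^e x^i y, or y^e x^(i+1) y^-1 (e = +-1, i >= 1).\<close>
definition irreducible_GS :: "letter list \<Rightarrow> bool" where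
  "irreducible_GS w \<longleftrightarrow>
     (\<forall>a. \<not> subword [a, linv a] w) \<and>
     (\<forall>e i. e \<in> {1, -1} \<and> i \<ge> 1 \<longrightarrow> \<not> subword ([ylet e] @ xpow i @ [Y]) w) \<and>
     (\<forall>e i. e \<in> {1, -1} \<and> i \<ge> 1 \<longrightarrow> \<not> subword ([ylet e] @ xpow (i + 1) @ [Yinv]) w)"

definition NN :: "letter list set" where
  "NN = {w. irreducible_GS w}"

fun nf_word :: "nat \<Rightarrow> (nat \<Rightarrow> int) \<Rightarrow> (nat \<Rightarrow> int) \<Rightarrow> letter list" where
  "nf_word 0 eps i = xpow (i 0)"
| "nf_word (Suc n) eps i = xpow (i (Suc n)) @ [ylet (eps (Suc n))] @ nf_word n eps i"

end

theory Submission
  imports Defs "HOL-Library.Sublist"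
begin

text \<open>Irreducibility is checked letter by letter: a # w is irreducible iff w is and no
  left-hand side of Sigma is a prefix of a # w. Both inclusions therefore go by induction,
  prepending one letter to a normal form at a time. Prepending x or x^-1 only changes the
  leading exponent i_n, the sole obstruction being a cancellation a a^-1, which is an excluded
  prefix. Prepending y^e opens a new syllable with i_(n+1) = 0, and the left-hand sides that can
  be a prefix of y^e x^(i_n) y^(eps_n) ... (y^e y^-e, y^e x^i y and y^e x^(i+1) y^-1 with i >= 1)
  occur precisely when conditions (1)-(3) fail at j = n with eps_(n+1) = e.\<close>

lemma subword_eq_sublist: "subword = sublist"
  by (simp add: fun_eq_iff subword_def sublist_def)

definition forbidden_subwords :: "letter list set" where
  "forbidden_subwords =
     {[a, linv a] | a. True} \<union>
     {[ylet e] @ xpow i @ [Y] | e i. e \<in> {1, -1} \<and> i \<ge> 1} \<union>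
     {[ylet e] @ xpow (i + 1) @ [Yinv] | e i. e \<in> {1, -1} \<and> i \<ge> 1}"

definition forbidden_prefix :: "letter list \<Rightarrow> bool" where
  "forbidden_prefix w \<longleftrightarrow> (\<exists>u\<in>forbidden_subwords. prefix u w)"

lemma irreducible_GS_iff: "irreducible_GS w \<longleftrightarrow> (\<forall>u\<in>forbidden_subwords. \<not> sublist u w)"
  unfolding irreducible_GS_def forbidden_subwords_def subword_eq_sublist by blast

lemma irreducible_GS_Nil: "irreducible_GS []"
  by (auto simp: irreducible_GS_iff forbidden_subwords_def)

lemma irreducible_GS_Cons:
  "irreducible_GS (a # w) \<longleftrightarrow> irreducible_GS w \<and> \<not> forbidden_prefix (a # w)"
  unfolding irreducible_GS_iff forbidden_prefix_def sublist_Cons_right by blast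

lemma forbidden_prefix_iff:
  "forbidden_prefix w \<longleftrightarrow>
     (\<exists>a. prefix [a, linv a] w) \<or>
     (\<exists>e i. e \<in> {1, -1} \<and> i \<ge> 1 \<and> prefix ([ylet e] @ xpow i @ [Y]) w) \<or>
     (\<exists>e i. e \<in> {1, -1} \<and> i \<ge> 1 \<and> prefix ([ylet e] @ xpow (i + 1) @ [Yinv]) w)"
  unfolding forbidden_prefix_def forbidden_subwords_def by blast

lemma ylet_neq_X [simp]: "ylet e \<noteq> X" "ylet e \<noteq> Xinv"
  by (simp_all add: ylet_def)

lemma ylet_eq_linv_ylet_iff:
  "e \<in> {1, -1} \<Longrightarrow> e' \<in> {1, -1} \<Longrightarrow> ylet e = linv (ylet e') \<longleftrightarrow> e \<noteq> e'"
  by (auto simp: ylet_def)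

lemma xpow_0 [simp]: "xpow 0 = []"
  by (simp add: xpow_def)

lemma set_xpow: "set (xpow c) \<subseteq> {X, Xinv}"
  by (auto simp: xpow_def)

lemma xpow_eq_xpow_iff: "xpow c = xpow c' \<longleftrightarrow> c = c'"
  by (auto simp: xpow_def)

lemma xpow_pos: "0 < c \<Longrightarrow> xpow c = X # xpow (c - 1)"
  by (simp add: xpow_def nat_diff_distrib' replicate_Suc [symmetric] del: replicate_Suc)

lemma xpow_neg:
  assumes "c < 0" shows "xpow c = Xinv # xpow (c + 1)"
proof -
  have "nat (- c) = Suc (nat (- (c + 1)))" using assms by simp
  then show ?thesis using assms by (simp add: xpow_def)
qed

lemma prefix_append_Cons_iff:
  assumes "set u \<subseteq> A" "set v \<subseteq> A" "z \<notin> A" "z' \<notin> A"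
  shows "prefix (u @ [z]) (v @ z' # r) \<longleftrightarrow> u = v \<and> z = z'"
  using assms
proof (induction u arbitrary: v)
  case Nil
  then show ?case by (cases v) auto
next
  case (Cons a u)
  then show ?case by (cases v) auto
qed

lemma forbidden_prefix_x:
  "a \<in> {X, Xinv} \<Longrightarrow> forbidden_prefix (a # w) \<longleftrightarrow> prefix [linv a] w"
  unfolding forbidden_prefix_iff by auto

lemma not_forbidden_prefix_ylet_xpow: "\<not> forbidden_prefix (ylet e # xpow c)"
  using set_xpow [of c] unfolding forbidden_prefix_iff
  by (auto simp: ylet_def split: if_splits dest!: set_mono_prefix)

definition junction_ok :: "int \<Rightarrow> int \<Rightarrow> int \<Rightarrow> bool" where
  "junction_ok e c e' \<longleftrightarrow> (c = 0 \<longrightarrow> e = e') \<and> (e = 1 \<longrightarrow> c \<le> 0) \<and> (e = -1 \<longrightarrow> c \<le> 1)"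

lemma forbidden_prefix_ylet_Cons:
  assumes "e \<in> {1, -1}"
  shows "forbidden_prefix (ylet e # w) \<longleftrightarrow>
           prefix [linv (ylet e)] w \<or> (\<exists>i\<ge>1. prefix (xpow i @ [Y]) w) \<or> (\<exists>i\<ge>2. prefix (xpow i @ [Yinv]) w)"
proof -
  have "(\<exists>e' i. e' \<in> {1, -1} \<and> i \<ge> 1 \<and> prefix ([ylet e'] @ xpow (i + 1) @ [Yinv]) (ylet e # w))
          \<longleftrightarrow> (\<exists>i\<ge>2. prefix (xpow i @ [Yinv]) w)"
  proof
    assume "\<exists>i\<ge>2. prefix (xpow i @ [Yinv]) w"
    then obtain i where "i \<ge> 2" "prefix (xpow (i - 1 + 1) @ [Yinv]) w" by auto
    then show "\<exists>e' i. e' \<in> {1, -1} \<and> i \<ge> 1 \<and> prefix ([ylet e'] @ xpow (i + 1) @ [Yinv]) (ylet e # w)"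
      using assms by (intro exI [of _ e] exI [of _ "i - 1"]) simp
  next
    assume "\<exists>e' i. e' \<in> {1, -1} \<and> i \<ge> 1 \<and> prefix ([ylet e'] @ xpow (i + 1) @ [Yinv]) (ylet e # w)"
    then obtain i where "i \<ge> 1" "prefix (xpow (i + 1) @ [Yinv]) w" by auto
    then show "\<exists>i\<ge>2. prefix (xpow i @ [Yinv]) w"
      by (intro exI [of _ "i + 1"]) simp
  qed
  then show ?thesis
    using assms unfolding forbidden_prefix_iff by auto
qed

lemma forbidden_prefix_ylet_xpow_ylet:
  assumes "e \<in> {1, -1}" "e' \<in> {1, -1}"
  shows "forbidden_prefix (ylet e' # xpow c @ ylet e # r) \<longleftrightarrow> \<not> junction_ok e c e'"
proof -
  have prefix_iff: "prefix (xpow c' @ [z]) (xpow c @ ylet e # r) \<longleftrightarrow> c' = c \<and> ylet e = z"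
    if "z \<in> {Y, Yinv}" for c' z
    using prefix_append_Cons_iff [OF set_xpow set_xpow] that by (auto simp: xpow_eq_xpow_iff)
  have "linv (ylet e') \<in> {Y, Yinv}"
    by (simp add: ylet_def)
  from prefix_iff [OF this, of 0] have inverse_pair:
    "prefix [linv (ylet e')] (xpow c @ ylet e # r) \<longleftrightarrow> c = 0 \<and> e \<noteq> e'"
    using assms by (auto simp: ylet_eq_linv_ylet_iff)
  have Y_pattern: "(\<exists>c'\<ge>1. prefix (xpow c' @ [Y]) (xpow c @ ylet e # r)) \<longleftrightarrow> c \<ge> 1 \<and> e = 1"
    using assms by (simp add: prefix_iff) (auto simp: ylet_def)
  have Yinv_pattern: "(\<exists>c'\<ge>2. prefix (xpow c' @ [Yinv]) (xpow c @ ylet e # r)) \<longleftrightarrow> c \<ge> 2 \<and> e = -1"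
    using assms by (simp add: prefix_iff) (auto simp: ylet_def)
  show ?thesis
    unfolding forbidden_prefix_ylet_Cons [OF assms(2)] junction_ok_def inverse_pair Y_pattern Yinv_pattern
    using assms by auto
qed

lemma irreducible_replicate_append:
  assumes "a \<in> {X, Xinv}" "irreducible_GS t" "\<not> prefix [linv a] t"
  shows "irreducible_GS (replicate k a @ t)"
proof (induction k)
  case 0
  then show ?case using assms(2) by simp
next
  case (Suc k)
  have "\<not> prefix [linv a] (replicate k a @ t)"
    using assms by (cases k) auto
  then show ?case
    using Suc assms(1) by (simp add: irreducible_GS_Cons forbidden_prefix_x)
qed

lemma irreducible_xpow_append:
  "irreducible_GS t \<Longrightarrow> \<not> prefix [X] t \<Longrightarrow> \<not> prefix [Xinv] t \<Longrightarrow> irreducible_GS (xpow c @ t)"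
  by (simp add: xpow_def irreducible_replicate_append)

lemma Cons_xpow_eq_xpow:
  assumes "a \<in> {X, Xinv}" "\<not> prefix [linv a] (xpow c @ t)"
  obtains c' where "a # xpow c = xpow c'"
proof (cases "a = X")
  case True
  then have "0 \<le> c" using assms(2) xpow_neg [of c] by force
  then have "X # xpow c = xpow (c + 1)" using xpow_pos [of "c + 1"] by simp
  with True that show ?thesis by blast
next
  case False
  then have "c \<le> 0" using assms xpow_pos [of c] by force
  then have "Xinv # xpow c = xpow (c - 1)" using xpow_neg [of "c - 1"] by simp
  with False assms(1) that show ?thesis by blast
qed

fun nf_tail :: "nat \<Rightarrow> (nat \<Rightarrow> int) \<Rightarrow> (nat \<Rightarrow> int) \<Rightarrow> letter list" where
  "nf_tail 0 eps i = []"
| "nf_tail (Suc n) eps i = ylet (eps (Suc n)) # nf_word n eps i"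

lemma nf_word_eq_xpow_append_nf_tail: "nf_word n eps i = xpow (i n) @ nf_tail n eps i"
  by (cases n) simp_all

lemma nf_word_cong:
  "(\<forall>j\<le>n. eps j = eps' j) \<Longrightarrow> (\<forall>j\<le>n. i j = i' j) \<Longrightarrow> nf_word n eps i = nf_word n eps' i'"
  by (induction n) auto

lemma nf_word_fun_upd: "nf_word n eps (i(n := c)) = xpow c @ nf_tail n eps i"
  by (cases n) (auto intro: nf_word_cong)

definition nf_admissible :: "nat \<Rightarrow> (nat \<Rightarrow> int) \<Rightarrow> (nat \<Rightarrow> int) \<Rightarrow> bool" where
  "nf_admissible n eps i \<longleftrightarrow>
     (\<forall>j\<in>{1..n}. eps j \<in> {1, -1}) \<and>
     (\<forall>j\<in>{1..n-1}. junction_ok (eps j) (i j) (eps (j + 1)))"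

lemma nf_admissible_cong:
  "(\<forall>j\<le>n. eps j = eps' j) \<Longrightarrow> (\<forall>j<n. i j = i' j) \<Longrightarrow> nf_admissible n eps i = nf_admissible n eps' i'"
  unfolding nf_admissible_def by (intro conj_cong ball_cong refl) auto

lemma nf_admissible_Suc:
  "nf_admissible (Suc n) eps i \<longleftrightarrow>
     nf_admissible n eps i \<and> eps (Suc n) \<in> {1, -1} \<and> (n \<ge> 1 \<longrightarrow> junction_ok (eps n) (i n) (eps (Suc n)))"
  unfolding nf_admissible_def by (cases n) (auto simp: atLeastAtMostSuc_conv)

lemma forbidden_prefix_ylet_nf_word:
  assumes "nf_admissible n eps i" "e \<in> {1, -1}"
  shows "forbidden_prefix (ylet e # nf_word n eps i) \<longleftrightarrow> n \<ge> 1 \<and> \<not> junction_ok (eps n) (i n) e"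
proof (cases n)
  case 0
  then show ?thesis by (simp add: not_forbidden_prefix_ylet_xpow)
next
  case (Suc m)
  then have "eps n \<in> {1, -1}"
    using assms(1) by (simp add: nf_admissible_Suc)
  with Suc assms(2) show ?thesis
    using forbidden_prefix_ylet_xpow_ylet by simp
qed

lemma nf_admissible_Suc_iff_not_forbidden_prefix:
  "nf_admissible (Suc n) eps i \<longleftrightarrow>
     nf_admissible n eps i \<and> eps (Suc n) \<in> {1, -1} \<and> \<not> forbidden_prefix (ylet (eps (Suc n)) # nf_word n eps i)"
  using forbidden_prefix_ylet_nf_word nf_admissible_Suc by auto

lemma irreducible_nf_word: "nf_admissible n eps i \<Longrightarrow> irreducible_GS (nf_word n eps i)"
proof (induction n)
  case 0
  show ?case using irreducible_xpow_append [OF irreducible_GS_Nil] by simp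
next
  case (Suc n)
  then have "irreducible_GS (ylet (eps (Suc n)) # nf_word n eps i)"
    by (simp add: nf_admissible_Suc_iff_not_forbidden_prefix irreducible_GS_Cons)
  then show ?case by (simp add: irreducible_xpow_append ylet_def)
qed

lemma nf_word_Cons_x:
  assumes "nf_admissible n eps i" "a \<in> {X, Xinv}" "\<not> forbidden_prefix (a # nf_word n eps i)"
  obtains i' where "nf_admissible n eps i'" "a # nf_word n eps i = nf_word n eps i'"
proof -
  obtain c where "a # xpow (i n) = xpow c"
    using Cons_xpow_eq_xpow assms(2,3) forbidden_prefix_x nf_word_eq_xpow_append_nf_tail by metis
  then have "a # nf_word n eps i = nf_word n eps (i(n := c))"
    by (simp add: nf_word_fun_upd nf_word_eq_xpow_append_nf_tail [of n eps i])
  moreover have "nf_admissible n eps (i(n := c))"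
    using assms(1) nf_admissible_cong [of n eps eps i "i(n := c)"] by simp
  ultimately show ?thesis using that by blast
qed

lemma nf_word_Cons_ylet:
  assumes "nf_admissible n eps i" "e \<in> {1, -1}" "\<not> forbidden_prefix (ylet e # nf_word n eps i)"
  shows "nf_admissible (Suc n) (eps(Suc n := e)) (i(Suc n := 0))"
    and "ylet e # nf_word n eps i = nf_word (Suc n) (eps(Suc n := e)) (i(Suc n := 0))"
proof -
  have same_word: "nf_word n (eps(Suc n := e)) (i(Suc n := 0)) = nf_word n eps i"
    by (rule nf_word_cong) auto
  have "nf_admissible n (eps(Suc n := e)) (i(Suc n := 0))"
    using assms(1) nf_admissible_cong [of n "eps(Suc n := e)" eps "i(Suc n := 0)" i] by simp
  with assms(2,3) same_word show "nf_admissible (Suc n) (eps(Suc n := e)) (i(Suc n := 0))"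
    by (simp add: nf_admissible_Suc_iff_not_forbidden_prefix)
  show "ylet e # nf_word n eps i = nf_word (Suc n) (eps(Suc n := e)) (i(Suc n := 0))"
    using same_word by (simp add: xpow_def)
qed

lemma irreducible_imp_nf_word:
  "irreducible_GS w \<Longrightarrow> \<exists>n eps i. nf_admissible n eps i \<and> w = nf_word n eps i"
proof (induction w)
  case Nil
  have "nf_admissible 0 eps (\<lambda>_. 0) \<and> [] = nf_word 0 eps (\<lambda>_. 0)" for eps
    by (simp add: nf_admissible_def xpow_def)
  then show ?case by blast
next
  case (Cons a w)
  then have "irreducible_GS w" and allowed: "\<not> forbidden_prefix (a # w)"
    by (simp_all add: irreducible_GS_Cons)
  then obtain n eps i where adm: "nf_admissible n eps i" and w: "w = nf_word n eps i"
    using Cons.IH by blast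
  show ?case
  proof (cases "a \<in> {X, Xinv}")
    case True
    then obtain i' where "nf_admissible n eps i'" "a # nf_word n eps i = nf_word n eps i'"
      using nf_word_Cons_x adm allowed w by blast
    then show ?thesis using w by blast
  next
    case False
    define e :: int where "e = (if a = Y then 1 else -1)"
    have "a = Y \<or> a = Yinv"
      using False by (cases a) simp_all
    then have e: "e \<in> {1, -1}" "a = ylet e"
      by (auto simp: e_def ylet_def)
    then show ?thesis
      using nf_word_Cons_ylet [OF adm e(1)] allowed w by blast
  qed
qed

theorem lemma2p2:
  shows "NN = {w. \<exists>(n::nat) (eps::nat \<Rightarrow> int) (i::nat \<Rightarrow> int).
            (\<forall>j\<in>{1..n}. eps j \<in> {1, -1}) \<and>
            (\<forall>j\<in>{1..n-1}.
               (i j = 0 \<longrightarrow> eps j = eps (j + 1)) \<and>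
               (eps j = 1 \<longrightarrow> i j \<le> 0) \<and>
               (eps j = -1 \<longrightarrow> i j \<le> 1)) \<and>
            w = nf_word n eps i}"
proof -
  have "NN = {w. \<exists>n eps i. nf_admissible n eps i \<and> w = nf_word n eps i}"
    unfolding NN_def using irreducible_nf_word irreducible_imp_nf_word by blast
  then show ?thesis
    unfolding nf_admissible_def junction_ok_def by (simp only: conj_assoc)
qed

end
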